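(* Let $p$ be a prime and let $G=\mathrm{SL}_2(\mathbb Q)$ act on the tree $\Delta_p$ via $G\subset\mathrm{SL}_2(\mathbb Q_p)$. Then the set of apartments $\Sigma$ of $\Delta_p$ such that the action of $G$ is strongly transitive with respect to the apartment system $G\Sigma=\{g\Sigma:g\in G\}$ is countable, whereas the complete apartment system of $\Delta_p$ is uncountable.
   Context: $\Delta_p$ is the Bruhat–Tits tree of $\mathrm{SL}_2(\mathbb Q_p)$ (vertices: homothety classes of $\mathbb Z_p$-lattices in $\mathbb Q_p^2$, adjacent if representatives satisfy $L\supset L'\supset pL$), a building with chambers the edges; the complete apartment system is the set of all bi-infinite lines (apartments) in the tree. An apartment system is a set $\mathcal A$ of apartments such that any two edges lie in a common member; the action is strongly transitive with respect to a $G$-invariant $\mathcal A$ if $G$ is transitive on pairs $(\Sigma,C)$ with $\Sigma\in\mathcal A$ and $C$ an edge of $\Sigma$. *)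

theory Defs
  imports "HOL-Analysis.Determinants" "HOL-Computational_Algebra.Primes"
begin

definition padic_val :: "nat \<Rightarrow> rat \<Rightarrow> int" where
  "padic_val p q = (case quotient_of q of (a, b) \<Rightarrow>
      int (multiplicity (int p) a) - int (multiplicity (int p) b))"

definition padic_abs :: "nat \<Rightarrow> rat \<Rightarrow> real" where
  "padic_abs p q = (if q = 0 then 0 else real p powr (- real_of_int (padic_val p q)))"

definition p_cauchy :: "nat \<Rightarrow> (nat \<Rightarrow> rat) \<Rightarrow> bool" where
  "p_cauchy p s \<longleftrightarrow> (\<forall>e>0. \<exists>N. \<forall>m\<ge>N. \<forall>n\<ge>N. padic_abs p (s m - s n) < e)"

definition p_equiv :: "nat \<Rightarrow> (nat \<Rightarrow> rat) \<Rightarrow> (nat \<Rightarrow> rat) \<Rightarrow> bool" where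
  "p_equiv p s t \<longleftrightarrow> (\<forall>e>0. \<exists>N. \<forall>n\<ge>N. padic_abs p (s n - t n) < e)"

type_synonym qp = "(nat \<Rightarrow> rat) set"

text \<open>An element of Q_p is an equivalence class of p-adic Cauchy sequences of rationals.\<close>
definition qp_class :: "nat \<Rightarrow> (nat \<Rightarrow> rat) \<Rightarrow> qp" where
  "qp_class p s = {t. p_cauchy p t \<and> p_equiv p s t}"

definition Qp :: "nat \<Rightarrow> qp set" where
  "Qp p = qp_class p ` {s. p_cauchy p s}"

definition qp_rep :: "qp \<Rightarrow> nat \<Rightarrow> rat" where
  "qp_rep x = (SOME s. s \<in> x)"

definition qp_add :: "nat \<Rightarrow> qp \<Rightarrow> qp \<Rightarrow> qp" where
  "qp_add p x y = qp_class p (\<lambda>n. qp_rep x n + qp_rep y n)"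

definition qp_mult :: "nat \<Rightarrow> qp \<Rightarrow> qp \<Rightarrow> qp" where
  "qp_mult p x y = qp_class p (\<lambda>n. qp_rep x n * qp_rep y n)"

definition qp_of_rat :: "nat \<Rightarrow> rat \<Rightarrow> qp" where
  "qp_of_rat p r = qp_class p (\<lambda>_. r)"

definition Zp :: "nat \<Rightarrow> qp set" where
  "Zp p = {x \<in> Qp p. \<exists>s\<in>x. \<forall>n. padic_abs p (s n) \<le> 1}"

type_synonym qp2 = "qp \<times> qp"
type_synonym lattice = "qp2 set"
type_synonym vertex = "lattice set"
type_synonym edge = "vertex set"
type_synonym apartment = "edge set"

text \<open>Z_p-span of a Q_p-basis (v1, v2) of Q_p^2.\<close>
definition is_lattice :: "nat \<Rightarrow> lattice \<Rightarrow> bool" where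
  "is_lattice p L \<longleftrightarrow> (\<exists>a b c d. a \<in> Qp p \<and> b \<in> Qp p \<and> c \<in> Qp p \<and> d \<in> Qp p \<and>
     qp_add p (qp_mult p a d) (qp_mult p (qp_of_rat p (-1)) (qp_mult p b c)) \<noteq> qp_of_rat p 0 \<and>
     L = {(qp_add p (qp_mult p x a) (qp_mult p y c), qp_add p (qp_mult p x b) (qp_mult p y d))
          | x y. x \<in> Zp p \<and> y \<in> Zp p})"

definition scale_lattice :: "nat \<Rightarrow> qp \<Rightarrow> lattice \<Rightarrow> lattice" where
  "scale_lattice p c L = (\<lambda>(u, v). (qp_mult p c u, qp_mult p c v)) ` L"

definition homothety_class :: "nat \<Rightarrow> lattice \<Rightarrow> vertex" where
  "homothety_class p L = {scale_lattice p c L | c. c \<in> Qp p \<and> c \<noteq> qp_of_rat p 0}"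

definition bt_vertices :: "nat \<Rightarrow> vertex set" where
  "bt_vertices p = homothety_class p ` {L. is_lattice p L}"

definition bt_adj :: "nat \<Rightarrow> vertex \<Rightarrow> vertex \<Rightarrow> bool" where
  "bt_adj p x y \<longleftrightarrow> x \<in> bt_vertices p \<and> y \<in> bt_vertices p \<and>
     (\<exists>L\<in>x. \<exists>L'\<in>y. L' \<subset> L \<and> scale_lattice p (qp_of_rat p (of_nat p)) L \<subset> L')"

text \<open>Chambers of the building: the edges of the tree.\<close>
definition bt_edges :: "nat \<Rightarrow> edge set" where
  "bt_edges p = {{x, y} | x y. bt_adj p x y}"

text \<open>Apartments: bi-infinite lines in the tree, given by their sets of edges.\<close>
definition bt_apartments :: "nat \<Rightarrow> apartment set" where
  "bt_apartments p = {range (\<lambda>i. {f i, f (i + 1)}) | f :: int \<Rightarrow> vertex.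
      inj f \<and> (\<forall>i. bt_adj p (f i) (f (i + 1)))}"

definition apartment_system :: "nat \<Rightarrow> apartment set \<Rightarrow> bool" where
  "apartment_system p A \<longleftrightarrow> A \<subseteq> bt_apartments p \<and>
     (\<forall>C\<in>bt_edges p. \<forall>D\<in>bt_edges p. \<exists>S\<in>A. C \<in> S \<and> D \<in> S)"

definition SL2Q :: "(rat^2^2) set" where
  "SL2Q = {g. det g = 1}"

definition act_vec :: "nat \<Rightarrow> rat^2^2 \<Rightarrow> qp2 \<Rightarrow> qp2" where
  "act_vec p g = (\<lambda>(u, v).
     (qp_add p (qp_mult p (qp_of_rat p (g$1$1)) u) (qp_mult p (qp_of_rat p (g$1$2)) v),
      qp_add p (qp_mult p (qp_of_rat p (g$2$1)) u) (qp_mult p (qp_of_rat p (g$2$2)) v)))"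

definition act_vertex :: "nat \<Rightarrow> rat^2^2 \<Rightarrow> vertex \<Rightarrow> vertex" where
  "act_vertex p g x = (\<lambda>L. act_vec p g ` L) ` x"

definition act_edge :: "nat \<Rightarrow> rat^2^2 \<Rightarrow> edge \<Rightarrow> edge" where
  "act_edge p g C = act_vertex p g ` C"

definition act_apartment :: "nat \<Rightarrow> rat^2^2 \<Rightarrow> apartment \<Rightarrow> apartment" where
  "act_apartment p g S = act_edge p g ` S"

definition orbit_apartment :: "nat \<Rightarrow> apartment \<Rightarrow> apartment set" where
  "orbit_apartment p S = (\<lambda>g. act_apartment p g S) ` SL2Q"

definition strongly_transitive_wrt :: "nat \<Rightarrow> apartment set \<Rightarrow> bool" where
  "strongly_transitive_wrt p A \<longleftrightarrow> apartment_system p A \<and>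
     (\<forall>S\<in>A. \<forall>C\<in>S. \<forall>S'\<in>A. \<forall>C'\<in>S'. \<exists>g\<in>SL2Q.
        act_apartment p g S = S' \<and> act_edge p g C = C')"

end

theory Submission
  imports Defs "HOL-Computational_Algebra.Squarefree"
begin

(* For x in Q_p let L_i(x) be the Z_p-lattice spanned by (p^i, 0) and (x, 1). Consecutive
   classes [L_i(x)], [L_(i+1)(x)] are adjacent, so they form an apartment A(x); and
   [L_i(x)] = [L_j(y)] forces i = j and |x - y| <= p^-i, so A(x) = A(y) only if x = y.
   Since Q_p is uncountable (the sums of p^j over j in S, for S a set of naturals, are
   pairwise distinct), there are uncountably many apartments.

   Conversely, if SL_2(Q) acts strongly transitively with respect to G.Sigma, then some
   g in SL_2(Q) translates Sigma by one or two steps, and, since G.Sigma is an apartment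
   system, every vertex of Sigma is a G-translate of a vertex of one fixed edge. Sigma is
   determined by g, the translation length and two adjacent vertices, which range over a
   countable set. *)

lemma nonzero_rat_int_frac:
  assumes "x \<noteq> (0 :: rat)"
  obtains a b where "a \<noteq> 0" "b \<noteq> 0" "x = of_int a / of_int b"
proof -
  obtain a b where q: "quotient_of x = (a, b)" by fastforce
  show ?thesis
    using that[of a b] quotient_of_denom_pos[OF q] quotient_of_div[OF q] assms by auto
qed

lemma uncountable_nat_set_set: "uncountable (UNIV :: nat set set)"
  using Cantors_theorem[of "UNIV :: nat set"] unfolding uncountable_def by auto

lemma shift_invariant_int_pred:
  fixes k :: int
  assumes shift: "\<And>i. P (i + k) \<longleftrightarrow> P i"
  shows "P i \<longleftrightarrow> P (i mod k)"
proof -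
  have "P (j + k * n) \<longleftrightarrow> P j" for j n
  proof (induction n rule: int_induct[where k = 0])
    case (step1 n)
    have "j + k * (n + 1) = (j + k * n) + k" by (simp add: algebra_simps)
    thus ?case by (simp only: shift step1.IH)
  next
    case (step2 n)
    have "j + k * n = (j + k * (n - 1)) + k" by (simp add: algebra_simps)
    thus ?case using step2.IH by (simp only: shift)
  qed simp
  from this[of "i mod k" "i div k"] show ?thesis by (simp add: mod_mult_div_eq)
qed

lemma unit_walk_without_return:
  fixes \<tau> :: "int \<Rightarrow> int"
  assumes step: "\<And>i. \<tau> (i + 1) = \<tau> i + 1 \<or> \<tau> (i + 1) = \<tau> i - 1"
    and no_return: "\<And>i. \<tau> (i + 2) \<noteq> \<tau> i"
  shows "(\<forall>i. \<tau> i = \<tau> 0 + i) \<or> (\<forall>i. \<tau> i = \<tau> 0 - i)"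
proof -
  define c d where "c = \<tau> 0" and "d = \<tau> 1 - \<tau> 0"
  have const: "\<tau> (i + 1) - \<tau> i = d" for i
  proof (induction i rule: int_induct[where k = 0])
    case (step1 i)
    thus ?case using step[of "i + 1"] step[of i] no_return[of i] by (smt (verit))
  next
    case (step2 i)
    thus ?case using step[of "i - 1"] step[of i] no_return[of "i - 1"] by (smt (verit))
  qed (simp add: d_def)
  have linear: "\<tau> i = c + d * i" for i
  proof (induction i rule: int_induct[where k = 0])
    case (step1 i) thus ?case using const[of i] by (simp add: algebra_simps)
  next
    case (step2 i) thus ?case using const[of "i - 1"] by (simp add: algebra_simps)
  qed (simp add: c_def)
  have "d = 1 \<or> d = - 1" using step[of 0] unfolding d_def by auto
  thus ?thesis using linear[of 0] by (auto simp: linear)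
qed

lemma SL2Q_mult: "a \<in> SL2Q \<Longrightarrow> b \<in> SL2Q \<Longrightarrow> a ** b \<in> SL2Q"
  unfolding SL2Q_def by (simp add: det_mul)

lemma SL2Q_one: "mat 1 \<in> SL2Q"
  unfolding SL2Q_def by simp

lemma SL2Q_left_inverse:
  assumes "g \<in> SL2Q"
  obtains h where "h ** g = mat 1"
  using assms invertible_det_nz[of g] invertible_left_inverse[of g] unfolding SL2Q_def by auto

lemma countable_SL2Q: "countable SL2Q"
  by (rule countable_subset[OF subset_UNIV]) simp

lemma matrix_mult_2_entries:
  fixes a b :: "'a::comm_semiring_1^2^2"
  shows "(a ** b) $ i $ j = a $ i $ 1 * b $ 1 $ j + a $ i $ 2 * b $ 2 $ j"
  unfolding matrix_matrix_mult_def by (simp add: sum_2)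

section \<open>The p-adic absolute value on the rationals\<close>

locale padic =
  fixes p :: nat
  assumes prime_p: "prime p"
begin

lemma p_gt_1: "p > 1"
  using prime_p prime_gt_1_nat by blast

lemma multiplicity_p_mult:
  "x \<noteq> 0 \<Longrightarrow> y \<noteq> 0 \<Longrightarrow>
     multiplicity (int p) (x * y) = multiplicity (int p) x + multiplicity (int p) y"
  using prime_p by (intro prime_elem_multiplicity_mult_distrib) auto

lemma padic_val_int_frac:
  assumes "a \<noteq> 0" "b \<noteq> 0"
  shows "padic_val p (of_int a / of_int b) =
           int (multiplicity (int p) a) - int (multiplicity (int p) b)"
proof -
  obtain c d where q: "quotient_of (of_int a / of_int b) = (c, d)" by fastforce
  have "d > 0" using quotient_of_denom_pos[OF q] .
  moreover have "(of_int a / of_int b :: rat) = of_int c / of_int d"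
    using quotient_of_div[OF q] .
  ultimately have "of_int (a * d) = (of_int (c * b) :: rat)"
    using assms by (simp add: field_simps)
  hence ad: "a * d = c * b" by linarith
  hence "c \<noteq> 0" using assms \<open>d > 0\<close> by auto
  hence "multiplicity (int p) a + multiplicity (int p) d =
           multiplicity (int p) c + multiplicity (int p) b"
    using ad assms \<open>d > 0\<close> by (metis multiplicity_p_mult less_irrefl)
  thus ?thesis unfolding padic_val_def q by simp
qed

lemma padic_val_mult:
  assumes "x \<noteq> 0" "y \<noteq> 0"
  shows "padic_val p (x * y) = padic_val p x + padic_val p y"
proof -
  obtain a b where ab: "a \<noteq> 0" "b \<noteq> 0" "x = of_int a / of_int b"
    using nonzero_rat_int_frac assms(1) by blast
  obtain c d where cd: "c \<noteq> 0" "d \<noteq> 0" "y = of_int c / of_int d"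
    using nonzero_rat_int_frac assms(2) by blast
  have "x * y = of_int (a * c) / of_int (b * d)" using ab cd by simp
  hence "padic_val p (x * y) =
           int (multiplicity (int p) (a * c)) - int (multiplicity (int p) (b * d))"
    using ab cd by (simp add: padic_val_int_frac del: of_int_mult)
  thus ?thesis using ab cd by (simp add: padic_val_int_frac multiplicity_p_mult)
qed

lemma padic_val_add_ge_min:
  assumes "x \<noteq> 0" "y \<noteq> 0" "x + y \<noteq> 0"
  shows "padic_val p (x + y) \<ge> min (padic_val p x) (padic_val p y)"
proof -
  obtain a b where ab: "a \<noteq> 0" "b \<noteq> 0" "x = of_int a / of_int b"
    using nonzero_rat_int_frac assms(1) by blast
  obtain c d where cd: "c \<noteq> 0" "d \<noteq> 0" "y = of_int c / of_int d"
    using nonzero_rat_int_frac assms(2) by blast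
  have sum: "x + y = of_int (a * d + c * b) / of_int (b * d)"
    using ab cd by (simp add: add_frac_eq)
  hence nz: "a * d + c * b \<noteq> 0" using assms(3) by (auto simp del: of_int_add of_int_mult)
  define m where "m = min (multiplicity (int p) (a * d)) (multiplicity (int p) (c * b))"
  have "int p ^ m dvd a * d + c * b"
    unfolding m_def by (intro dvd_add multiplicity_dvd') auto
  hence "m \<le> multiplicity (int p) (a * d + c * b)"
    using nz prime_p by (intro multiplicity_geI) (auto simp: not_prime_unit)
  moreover have "padic_val p (x + y) =
      int (multiplicity (int p) (a * d + c * b)) - int (multiplicity (int p) (b * d))"
    unfolding sum using nz ab cd by (simp add: padic_val_int_frac del: of_int_mult of_int_add)
  ultimately show ?thesis
    using ab cd unfolding m_def by (simp add: padic_val_int_frac multiplicity_p_mult)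
qed

lemma padic_val_uminus: "padic_val p (- x) = padic_val p x"
proof (cases "x = 0")
  case False
  then obtain a b where ab: "a \<noteq> 0" "b \<noteq> 0" "x = of_int a / of_int b"
    using nonzero_rat_int_frac by blast
  thus ?thesis using ab padic_val_int_frac[of "- a" b] padic_val_int_frac[of a b] by simp
qed simp

lemma padic_val_one: "padic_val p 1 = 0"
  using padic_val_int_frac[of 1 1] by simp

lemma padic_val_p_power: "padic_val p (of_nat p ^ k) = int k"
proof -
  have "multiplicity (int p) (int p ^ k) = k"
    using prime_p by (intro multiplicity_prime_power) simp
  thus ?thesis using padic_val_int_frac[of "int p ^ k" 1] p_gt_1 by simp
qed

lemma padic_val_p_powi: "padic_val p (of_nat p powi k) = k"
proof (cases "k \<ge> 0")
  case True
  thus ?thesis using padic_val_p_power[of "nat k"] by (simp add: power_int_def)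
next
  case False
  have "padic_val p (inverse (of_nat p ^ nat (- k))) + int (nat (- k)) = 0"
    using padic_val_mult[of "inverse (of_nat p ^ nat (- k))" "of_nat p ^ nat (- k)"] p_gt_1
    by (simp add: padic_val_one padic_val_p_power)
  thus ?thesis using False by (simp add: power_int_def power_inverse)
qed

abbreviation pabs :: "rat \<Rightarrow> real" where
  "pabs \<equiv> padic_abs p"

lemma pabs_nonneg [simp]: "pabs x \<ge> 0"
  by (simp add: padic_abs_def)

lemma pabs_zero [simp]: "pabs 0 = 0"
  by (simp add: padic_abs_def)

lemma pabs_eq_0_iff [simp]: "pabs x = 0 \<longleftrightarrow> x = 0"
  using p_gt_1 by (simp add: padic_abs_def)

lemma pabs_pos_iff [simp]: "pabs x > 0 \<longleftrightarrow> x \<noteq> 0"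
  using pabs_nonneg[of x] pabs_eq_0_iff[of x] by linarith

lemma pabs_minus [simp]: "pabs (- x) = pabs x"
  by (simp add: padic_abs_def padic_val_uminus)

lemma pabs_minus_commute: "pabs (x - y) = pabs (y - x)"
  by (metis minus_diff_eq pabs_minus)

lemma pabs_mult: "pabs (x * y) = pabs x * pabs y"
  using p_gt_1 by (auto simp: padic_abs_def padic_val_mult powr_add[symmetric])

lemma pabs_one [simp]: "pabs 1 = 1"
  using p_gt_1 by (simp add: padic_abs_def padic_val_one)

lemma pabs_p_powi: "pabs (of_nat p powi k) = p powr - real_of_int k"
  using p_gt_1 by (simp add: padic_abs_def padic_val_p_powi)

lemma pabs_p_power: "pabs (of_nat p ^ k) = p powr - real k"
  using pabs_p_powi[of "int k"] by (simp add: power_int_def)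

lemma pabs_add_le_max: "pabs (x + y) \<le> max (pabs x) (pabs y)"
proof (cases "x = 0 \<or> y = 0 \<or> x + y = 0")
  case False
  hence "padic_val p (x + y) \<ge> min (padic_val p x) (padic_val p y)"
    using padic_val_add_ge_min by blast
  thus ?thesis using False p_gt_1 by (auto simp: padic_abs_def min_def max_def split: if_splits)
qed (auto simp: le_max_iff_disj)

lemma pabs_add_less: "pabs x < e \<Longrightarrow> pabs y < e \<Longrightarrow> pabs (x + y) < e"
  using pabs_add_le_max[of x y] by linarith

lemma pabs_add_le: "pabs x \<le> e \<Longrightarrow> pabs y \<le> e \<Longrightarrow> pabs (x + y) \<le> e"
  using pabs_add_le_max[of x y] by linarith

lemma pabs_add_eq_left:
  assumes "pabs y < pabs x"
  shows "pabs (x + y) = pabs x"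
proof -
  have "pabs x \<le> max (pabs (x + y)) (pabs (- y))"
    using pabs_add_le_max[of "x + y" "- y"] by simp
  moreover have "pabs (x + y) \<le> pabs x" using pabs_add_le_max[of x y] assms by simp
  ultimately show ?thesis using assms by (auto simp: max_def split: if_splits)
qed

lemma abs_pabs_diff_le: "\<bar>pabs x - pabs y\<bar> \<le> pabs (x - y)"
proof -
  have "pabs x \<le> max (pabs (x - y)) (pabs y)" "pabs y \<le> max (pabs (x - y)) (pabs x)"
    using pabs_add_le_max[of "x - y" y] pabs_add_le_max[of "y - x" x] pabs_minus_commute[of x y]
    by simp_all
  thus ?thesis using pabs_nonneg[of x] pabs_nonneg[of y] pabs_nonneg[of "x - y"] by argo
qed

lemma pabs_sum_le:
  "(\<And>j. j \<in> S \<Longrightarrow> pabs (f j) \<le> B) \<Longrightarrow> B \<ge> 0 \<Longrightarrow> pabs (\<Sum>j\<in>S. f j) \<le> B"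
  by (induction S rule: infinite_finite_induct) (auto intro: pabs_add_le)

section \<open>The p-adic numbers as a completion\<close>

abbreviation qp_add_p :: "qp \<Rightarrow> qp \<Rightarrow> qp" (infixl "\<oplus>" 65) where
  "qp_add_p \<equiv> qp_add p"

abbreviation qp_mult_p :: "qp \<Rightarrow> qp \<Rightarrow> qp" (infixl "\<otimes>" 70) where
  "qp_mult_p \<equiv> qp_mult p"

abbreviation \<iota> :: "rat \<Rightarrow> qp" where
  "\<iota> \<equiv> qp_of_rat p"

abbreviation qp_diff :: "qp \<Rightarrow> qp \<Rightarrow> qp" (infixl "\<ominus>" 65) where
  "x \<ominus> y \<equiv> x \<oplus> \<iota> (- 1) \<otimes> y"

abbreviation pcauchy :: "(nat \<Rightarrow> rat) \<Rightarrow> bool" where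
  "pcauchy \<equiv> p_cauchy p"

abbreviation pequiv :: "(nat \<Rightarrow> rat) \<Rightarrow> (nat \<Rightarrow> rat) \<Rightarrow> bool" where
  "pequiv \<equiv> p_equiv p"

abbreviation pclass :: "(nat \<Rightarrow> rat) \<Rightarrow> qp" where
  "pclass \<equiv> qp_class p"

lemma pequiv_refl: "pequiv s s"
  unfolding p_equiv_def by simp

lemma pequiv_sym: "pequiv s t \<Longrightarrow> pequiv t s"
  unfolding p_equiv_def by (metis pabs_minus_commute)

lemma pequiv_trans:
  assumes "pequiv s t" "pequiv t u"
  shows "pequiv s u"
  unfolding p_equiv_def
proof (intro allI impI)
  fix e :: real assume "e > 0"
  then obtain N1 N2 where N: "\<forall>n\<ge>N1. pabs (s n - t n) < e" "\<forall>n\<ge>N2. pabs (t n - u n) < e"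
    using assms unfolding p_equiv_def by meson
  have "pabs (s n - u n) < e" if "n \<ge> max N1 N2" for n
    using pabs_add_less[of "s n - t n" e "t n - u n"] N that by simp
  thus "\<exists>N. \<forall>n\<ge>N. pabs (s n - u n) < e" by blast
qed

lemma pcauchy_const [simp]: "pcauchy (\<lambda>_. r)"
  unfolding p_cauchy_def by auto

lemma pcauchy_bounded:
  assumes "pcauchy s"
  obtains B where "B > 0" "\<And>n. pabs (s n) \<le> B"
proof -
  obtain N where N: "\<forall>m\<ge>N. \<forall>n\<ge>N. pabs (s m - s n) < 1"
    using assms unfolding p_cauchy_def by (meson zero_less_one)
  define B where "B = (\<Sum>n\<le>N. pabs (s n)) + 1"
  have head: "pabs (s n) \<le> (\<Sum>n\<le>N. pabs (s n))" if "n \<le> N" for n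
    using that by (intro member_le_sum) auto
  have "pabs (s n) \<le> B" for n
  proof (cases "n \<le> N")
    case False
    have "pabs (s n) \<le> max (pabs (s n - s N)) (pabs (s N))"
      using pabs_add_le_max[of "s n - s N" "s N"] by simp
    moreover have "pabs (s n - s N) < 1" using N False by simp
    ultimately show ?thesis
      using head[of N] sum_nonneg[of "{..N}" "\<lambda>n. pabs (s n)"] unfolding B_def
      by (auto simp: max_def split: if_splits)
  qed (use head in \<open>force simp: B_def\<close>)
  moreover have "B > 0" unfolding B_def by (simp add: add_nonneg_pos sum_nonneg)
  ultimately show ?thesis using that by blast
qed

lemma pcauchy_add [simp]:
  assumes "pcauchy s" "pcauchy t"
  shows "pcauchy (\<lambda>n. s n + t n)"
  unfolding p_cauchy_def
proof (intro allI impI)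
  fix e :: real assume "e > 0"
  then obtain N1 N2 where N: "\<forall>m\<ge>N1. \<forall>n\<ge>N1. pabs (s m - s n) < e"
    "\<forall>m\<ge>N2. \<forall>n\<ge>N2. pabs (t m - t n) < e"
    using assms unfolding p_cauchy_def by meson
  have "pabs (s m + t m - (s n + t n)) < e" if "m \<ge> max N1 N2" "n \<ge> max N1 N2" for m n
    using pabs_add_less[of "s m - s n" e "t m - t n"] N that by (simp add: algebra_simps)
  thus "\<exists>N. \<forall>m\<ge>N. \<forall>n\<ge>N. pabs (s m + t m - (s n + t n)) < e" by blast
qed

lemma pequiv_add:
  assumes "pequiv s s'" "pequiv t t'"
  shows "pequiv (\<lambda>n. s n + t n) (\<lambda>n. s' n + t' n)"
  unfolding p_equiv_def
proof (intro allI impI)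
  fix e :: real assume "e > 0"
  then obtain N1 N2 where N: "\<forall>n\<ge>N1. pabs (s n - s' n) < e" "\<forall>n\<ge>N2. pabs (t n - t' n) < e"
    using assms unfolding p_equiv_def by meson
  have "pabs (s n + t n - (s' n + t' n)) < e" if "n \<ge> max N1 N2" for n
    using pabs_add_less[of "s n - s' n" e "t n - t' n"] N that by (simp add: algebra_simps)
  thus "\<exists>N. \<forall>n\<ge>N. pabs (s n + t n - (s' n + t' n)) < e" by blast
qed

lemma pabs_mult_diff_le:
  assumes "pabs a \<le> B" "pabs b' \<le> B"
  shows "pabs (a * b - a' * b') \<le> B * max (pabs (a - a')) (pabs (b - b'))"
proof -
  have "a * b - a' * b' = a * (b - b') + (a - a') * b'"
    by (simp add: algebra_simps)
  hence "pabs (a * b - a' * b') \<le> max (pabs a * pabs (b - b')) (pabs (a - a') * pabs b')"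
    using pabs_add_le_max[of "a * (b - b')" "(a - a') * b'"] by (simp add: pabs_mult)
  also have "\<dots> \<le> max (B * pabs (b - b')) (B * pabs (a - a'))"
    using assms by (intro max.mono) (auto simp: mult.commute intro: mult_right_mono)
  also have "\<dots> \<le> B * max (pabs (a - a')) (pabs (b - b'))"
  proof -
    have "B \<ge> 0" using assms(1) pabs_nonneg[of a] by linarith
    thus ?thesis by (intro max.boundedI mult_left_mono) auto
  qed
  finally show ?thesis .
qed

lemma pabs_mult_diff_less:
  assumes "B > 0" "pabs a \<le> B" "pabs b' \<le> B"
    and "pabs (a - a') < e / B" "pabs (b - b') < e / B"
  shows "pabs (a * b - a' * b') < e"
proof -
  have "pabs (a * b - a' * b') \<le> B * max (pabs (a - a')) (pabs (b - b'))"
    using assms(2,3) by (rule pabs_mult_diff_le)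
  also have "\<dots> < B * (e / B)"
    using assms by (intro mult_strict_left_mono) auto
  finally show ?thesis using assms(1) by simp
qed

lemma pcauchy_mult [simp]:
  assumes "pcauchy s" "pcauchy t"
  shows "pcauchy (\<lambda>n. s n * t n)"
  unfolding p_cauchy_def
proof (intro allI impI)
  fix e :: real assume "e > 0"
  obtain B1 B2 where B: "B1 > 0" "\<And>n. pabs (s n) \<le> B1" "B2 > 0" "\<And>n. pabs (t n) \<le> B2"
    using pcauchy_bounded assms by metis
  define B where "B = max B1 B2"
  have "e / B > 0" using \<open>e > 0\<close> B unfolding B_def by simp
  then obtain N1 N2 where "\<forall>m\<ge>N1. \<forall>n\<ge>N1. pabs (s m - s n) < e / B"
    "\<forall>m\<ge>N2. \<forall>n\<ge>N2. pabs (t m - t n) < e / B"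
    using assms unfolding p_cauchy_def by meson
  moreover have "B > 0" "\<And>n. pabs (s n) \<le> B" "\<And>n. pabs (t n) \<le> B"
    using B unfolding B_def by (auto simp: le_max_iff_disj)
  ultimately have "\<forall>m\<ge>max N1 N2. \<forall>n\<ge>max N1 N2. pabs (s m * t m - s n * t n) < e"
    by (auto intro: pabs_mult_diff_less)
  thus "\<exists>N. \<forall>m\<ge>N. \<forall>n\<ge>N. pabs (s m * t m - s n * t n) < e" by blast
qed

lemma pcauchy_uminus [simp]: "pcauchy s \<Longrightarrow> pcauchy (\<lambda>n. - s n)"
  using pcauchy_mult[of "\<lambda>_. - 1" s] by simp

lemma pcauchy_diff [simp]: "pcauchy s \<Longrightarrow> pcauchy t \<Longrightarrow> pcauchy (\<lambda>n. s n - t n)"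
  using pcauchy_add[of s "\<lambda>n. - t n"] by simp

lemma pequiv_mult:
  assumes "pcauchy s" "pcauchy t'" "pequiv s s'" "pequiv t t'"
  shows "pequiv (\<lambda>n. s n * t n) (\<lambda>n. s' n * t' n)"
  unfolding p_equiv_def
proof (intro allI impI)
  fix e :: real assume "e > 0"
  obtain B1 B2 where B: "B1 > 0" "\<And>n. pabs (s n) \<le> B1" "B2 > 0" "\<And>n. pabs (t' n) \<le> B2"
    using pcauchy_bounded assms(1,2) by metis
  define B where "B = max B1 B2"
  have "e / B > 0" using \<open>e > 0\<close> B unfolding B_def by simp
  then obtain N1 N2 where "\<forall>n\<ge>N1. pabs (s n - s' n) < e / B" "\<forall>n\<ge>N2. pabs (t n - t' n) < e / B"
    using assms(3,4) unfolding p_equiv_def by meson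
  moreover have "B > 0" "\<And>n. pabs (s n) \<le> B" "\<And>n. pabs (t' n) \<le> B"
    using B unfolding B_def by (auto simp: le_max_iff_disj)
  ultimately have "\<forall>n\<ge>max N1 N2. pabs (s n * t n - s' n * t' n) < e"
    by (auto intro: pabs_mult_diff_less)
  thus "\<exists>N. \<forall>n\<ge>N. pabs (s n * t n - s' n * t' n) < e" by blast
qed

lemma pcauchy_pequiv:
  assumes "pcauchy s" "pequiv s t"
  shows "pcauchy t"
  unfolding p_cauchy_def
proof (intro allI impI)
  fix e :: real assume "e > 0"
  then obtain N1 N2 where N: "\<forall>m\<ge>N1. \<forall>n\<ge>N1. pabs (s m - s n) < e"
    "\<forall>n\<ge>N2. pabs (s n - t n) < e"
    using assms unfolding p_cauchy_def p_equiv_def by meson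
  have "pabs (t m - t n) < e" if "m \<ge> max N1 N2" "n \<ge> max N1 N2" for m n
  proof -
    have "pabs (t m - s m) < e" using N(2) that pabs_minus_commute[of "t m"] by simp
    moreover have "pabs ((s m - s n) + (s n - t n)) < e"
      using N that by (intro pabs_add_less) auto
    ultimately have "pabs ((t m - s m) + ((s m - s n) + (s n - t n))) < e" by (rule pabs_add_less)
    thus ?thesis by simp
  qed
  thus "\<exists>N. \<forall>m\<ge>N. \<forall>n\<ge>N. pabs (t m - t n) < e" by blast
qed

lemma pclass_mem: "pcauchy s \<Longrightarrow> s \<in> pclass s"
  unfolding qp_class_def by (simp add: pequiv_refl)

lemma pclass_eq_iff:
  assumes "pcauchy s" "pcauchy t"
  shows "pclass s = pclass t \<longleftrightarrow> pequiv s t"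
proof
  assume "pclass s = pclass t"
  thus "pequiv s t" using pclass_mem[OF assms(2)] unfolding qp_class_def by blast
next
  assume "pequiv s t"
  thus "pclass s = pclass t"
    unfolding qp_class_def by (blast intro: pequiv_trans pequiv_sym)
qed

lemma pclass_in_Qp [simp]: "pcauchy s \<Longrightarrow> pclass s \<in> Qp p"
  unfolding Qp_def by simp

lemma QpE:
  assumes "x \<in> Qp p"
  obtains s where "pcauchy s" "x = pclass s"
  using assms unfolding Qp_def by blast

lemma qp_rep_pclass:
  assumes "pcauchy s"
  shows "pcauchy (qp_rep (pclass s))" "pequiv s (qp_rep (pclass s))"
proof -
  have "qp_rep (pclass s) \<in> pclass s"
    unfolding qp_rep_def using pclass_mem[OF assms] by (rule someI[of "\<lambda>t. t \<in> pclass s"])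
  thus "pcauchy (qp_rep (pclass s))" "pequiv s (qp_rep (pclass s))"
    unfolding qp_class_def by auto
qed

lemma qp_add_pclass [simp]:
  assumes "pcauchy s" "pcauchy t"
  shows "pclass s \<oplus> pclass t = pclass (\<lambda>n. s n + t n)"
  unfolding qp_add_def using assms qp_rep_pclass[OF assms(1)] qp_rep_pclass[OF assms(2)]
  by (simp add: pclass_eq_iff pequiv_add pequiv_sym)

lemma qp_mult_pclass [simp]:
  assumes "pcauchy s" "pcauchy t"
  shows "pclass s \<otimes> pclass t = pclass (\<lambda>n. s n * t n)"
  unfolding qp_mult_def using assms qp_rep_pclass[OF assms(1)] qp_rep_pclass[OF assms(2)]
  by (simp add: pclass_eq_iff pequiv_mult pequiv_sym)

lemma qp_add_closed [simp]: "x \<in> Qp p \<Longrightarrow> y \<in> Qp p \<Longrightarrow> x \<oplus> y \<in> Qp p"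
  by (elim QpE) simp

lemma qp_mult_closed [simp]: "x \<in> Qp p \<Longrightarrow> y \<in> Qp p \<Longrightarrow> x \<otimes> y \<in> Qp p"
  by (elim QpE) simp

lemma qp_of_rat_closed [simp]: "\<iota> r \<in> Qp p"
  unfolding qp_of_rat_def by simp

lemma qp_of_rat_inject [simp]: "\<iota> a = \<iota> b \<longleftrightarrow> a = b"
proof
  assume "\<iota> a = \<iota> b"
  hence "pequiv (\<lambda>_. a) (\<lambda>_. b)"
    unfolding qp_of_rat_def by (simp add: pclass_eq_iff)
  hence "pabs (a - b) < e" if "e > 0" for e
    using that unfolding p_equiv_def by fastforce
  thus "a = b" using pabs_pos_iff[of "a - b"] by (metis less_irrefl right_minus_eq)
qed simp



lemma qp_mult_assoc:
  "x \<in> Qp p \<Longrightarrow> y \<in> Qp p \<Longrightarrow> z \<in> Qp p \<Longrightarrow> x \<otimes> y \<otimes> z = x \<otimes> (y \<otimes> z)"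
  by (auto elim!: QpE simp: algebra_simps)


lemma qp_of_rat_add [simp]: "\<iota> a \<oplus> \<iota> b = \<iota> (a + b)"
  by (simp add: qp_of_rat_def)

lemma qp_of_rat_mult [simp]: "\<iota> a \<otimes> \<iota> b = \<iota> (a * b)"
  by (simp add: qp_of_rat_def)

lemma qp_add_0_left [simp]: "x \<in> Qp p \<Longrightarrow> \<iota> 0 \<oplus> x = x"
  by (auto elim!: QpE simp: qp_of_rat_def)

lemma qp_add_0_right [simp]: "x \<in> Qp p \<Longrightarrow> x \<oplus> \<iota> 0 = x"
  by (auto elim!: QpE simp: qp_of_rat_def)

lemma qp_mult_0_left [simp]: "x \<in> Qp p \<Longrightarrow> \<iota> 0 \<otimes> x = \<iota> 0"
  by (auto elim!: QpE simp: qp_of_rat_def)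

lemma qp_mult_0_right [simp]: "x \<in> Qp p \<Longrightarrow> x \<otimes> \<iota> 0 = \<iota> 0"
  by (auto elim!: QpE simp: qp_of_rat_def)

lemma qp_mult_1_left [simp]: "x \<in> Qp p \<Longrightarrow> \<iota> 1 \<otimes> x = x"
  by (auto elim!: QpE simp: qp_of_rat_def)

lemma qp_mult_1_right [simp]: "x \<in> Qp p \<Longrightarrow> x \<otimes> \<iota> 1 = x"
  by (auto elim!: QpE simp: qp_of_rat_def)

lemma pcauchy_pabs_cases:
  assumes "pcauchy s"
  shows "(\<lambda>n. pabs (s n)) \<longlonglongrightarrow> 0 \<or> (\<exists>N c. \<forall>n\<ge>N. pabs (s n) = c)"
proof (cases "\<forall>e>0. \<exists>N. \<forall>n\<ge>N. pabs (s n) < e")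
  case True
  thus ?thesis unfolding LIMSEQ_iff by simp
next
  case False
  then obtain e where e: "e > 0" "\<forall>N. \<exists>n\<ge>N. pabs (s n) \<ge> e"
    by (auto simp: not_less)
  obtain N where N: "\<forall>m\<ge>N. \<forall>n\<ge>N. pabs (s m - s n) < e"
    using assms e(1) unfolding p_cauchy_def by blast
  obtain n0 where n0: "n0 \<ge> N" "pabs (s n0) \<ge> e" using e(2) by blast
  have "pabs (s n) = pabs (s n0)" if "n \<ge> N" for n
  proof -
    have "pabs (s n - s n0) < pabs (s n0)" using N n0 that by (meson less_le_trans)
    from pabs_add_eq_left[OF this] show ?thesis by simp
  qed
  thus ?thesis by blast
qed

definition qp_abs :: "qp \<Rightarrow> real" where
  "qp_abs x = lim (\<lambda>n. pabs (qp_rep x n))"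

lemma qp_abs_pclass:
  assumes "pcauchy s"
  shows "(\<lambda>n. pabs (s n)) \<longlonglongrightarrow> qp_abs (pclass s)"
proof -
  define t where "t = qp_rep (pclass s)"
  have t: "pcauchy t" "pequiv s t" unfolding t_def using qp_rep_pclass[OF assms] by auto
  have "convergent (\<lambda>n. pabs (t n))"
    using pcauchy_pabs_cases[OF t(1)]
  proof
    assume "\<exists>N c. \<forall>n\<ge>N. pabs (t n) = c"
    then obtain N c where "\<forall>n\<ge>N. pabs (t n) = c" by blast
    hence "(\<lambda>n. pabs (t n)) \<longlonglongrightarrow> c"
      unfolding LIMSEQ_iff by (metis diff_self norm_zero)
    thus ?thesis by (rule convergentI)
  qed (rule convergentI)
  hence lim: "(\<lambda>n. pabs (t n)) \<longlonglongrightarrow> qp_abs (pclass s)"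
    unfolding qp_abs_def t_def[symmetric] by (simp add: convergent_LIMSEQ_iff)
  have "(\<lambda>n. pabs (s n - t n)) \<longlonglongrightarrow> 0"
    using t(2) unfolding p_equiv_def LIMSEQ_iff by simp
  hence "(\<lambda>n. pabs (s n) - pabs (t n)) \<longlonglongrightarrow> 0"
    by (rule tendsto_0_le[where K = 1]) (simp add: abs_pabs_diff_le)
  from tendsto_add[OF this lim] show ?thesis by simp
qed

lemma qp_abs_mult:
  assumes "x \<in> Qp p" "y \<in> Qp p"
  shows "qp_abs (x \<otimes> y) = qp_abs x * qp_abs y"
proof -
  obtain s t where st: "pcauchy s" "x = pclass s" "pcauchy t" "y = pclass t"
    using assms by (metis QpE)
  have "(\<lambda>n. pabs (s n * t n)) \<longlonglongrightarrow> qp_abs x * qp_abs y"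
    unfolding pabs_mult st by (intro tendsto_mult qp_abs_pclass st)
  moreover have "(\<lambda>n. pabs (s n * t n)) \<longlonglongrightarrow> qp_abs (x \<otimes> y)"
    using st qp_abs_pclass[of "\<lambda>n. s n * t n"] by simp
  ultimately show ?thesis using LIMSEQ_unique by blast
qed


lemma qp_abs_of_rat [simp]: "qp_abs (\<iota> r) = pabs r"
  using qp_abs_pclass[of "\<lambda>_. r"] unfolding qp_of_rat_def by (simp add: LIMSEQ_const_iff)

lemma qp_abs_nonneg:
  assumes "x \<in> Qp p"
  shows "qp_abs x \<ge> 0"
proof -
  obtain s where s: "pcauchy s" "x = pclass s" using assms QpE by blast
  show ?thesis unfolding s(2) by (rule LIMSEQ_le_const[OF qp_abs_pclass[OF s(1)]]) simp
qed

lemma qp_abs_eq_0_iff: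
  assumes "x \<in> Qp p"
  shows "qp_abs x = 0 \<longleftrightarrow> x = \<iota> 0"
proof
  assume "qp_abs x = 0"
  obtain s where s: "pcauchy s" "x = pclass s" using assms QpE by blast
  hence "(\<lambda>n. pabs (s n)) \<longlonglongrightarrow> 0" using qp_abs_pclass \<open>qp_abs x = 0\<close> by force
  hence "pequiv s (\<lambda>_. 0)" unfolding p_equiv_def LIMSEQ_iff by simp
  thus "x = \<iota> 0" unfolding s(2) qp_of_rat_def using s(1) by (simp add: pclass_eq_iff)
qed simp

lemma qp_abs_pos: "x \<in> Qp p \<Longrightarrow> x \<noteq> \<iota> 0 \<Longrightarrow> qp_abs x > 0"
  using qp_abs_nonneg qp_abs_eq_0_iff by force

lemma pcauchy_eventually_pabs_le:
  assumes "pcauchy s" "qp_abs (pclass s) \<le> c" "c > 0"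
  obtains N where "\<forall>n\<ge>N. pabs (s n) \<le> c"
  using pcauchy_pabs_cases[OF assms(1)]
proof
  assume "(\<lambda>n. pabs (s n)) \<longlonglongrightarrow> 0"
  then obtain N where "\<forall>n\<ge>N. norm (pabs (s n) - 0) < c"
    using LIMSEQ_D assms(3) by blast
  thus ?thesis using that[of N] by (simp add: less_imp_le)
next
  assume "\<exists>N c'. \<forall>n\<ge>N. pabs (s n) = c'"
  then obtain N c' where N: "\<forall>n\<ge>N. pabs (s n) = c'" by blast
  hence "(\<lambda>n. pabs (s (n + N))) \<longlonglongrightarrow> c'" by simp
  moreover have "(\<lambda>n. pabs (s (n + N))) \<longlonglongrightarrow> qp_abs (pclass s)"
    using qp_abs_pclass[OF assms(1)] by (rule LIMSEQ_ignore_initial_segment)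
  ultimately have "c' = qp_abs (pclass s)" by (rule LIMSEQ_unique)
  thus ?thesis using that[of N] N assms(2) by simp
qed

lemma Zp_iff: "x \<in> Zp p \<longleftrightarrow> x \<in> Qp p \<and> qp_abs x \<le> 1"
proof
  assume "x \<in> Zp p"
  then obtain s where s: "s \<in> x" "\<forall>n. pabs (s n) \<le> 1" and x: "x \<in> Qp p"
    unfolding Zp_def by blast
  obtain t where t: "pcauchy t" "x = pclass t" using x QpE by blast
  have "pcauchy s" "pequiv t s" using s(1) unfolding t(2) qp_class_def by auto
  hence "x = pclass s" unfolding t(2) using t(1) by (simp add: pclass_eq_iff)
  hence "(\<lambda>n. pabs (s n)) \<longlonglongrightarrow> qp_abs x" using qp_abs_pclass \<open>pcauchy s\<close> by simp
  hence "qp_abs x \<le> 1" by (rule LIMSEQ_le_const2) (use s(2) in simp)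
  thus "x \<in> Qp p \<and> qp_abs x \<le> 1" using x by simp
next
  assume x: "x \<in> Qp p \<and> qp_abs x \<le> 1"
  obtain s where s: "pcauchy s" "x = pclass s" using x QpE by blast
  obtain N where N: "\<forall>n\<ge>N. pabs (s n) \<le> 1"
    using pcauchy_eventually_pabs_le[OF s(1), of 1] x s(2) by auto
  define t where "t n = (if n < N then 0 else s n)" for n
  have "pequiv s t" unfolding p_equiv_def
  proof (intro allI impI exI[of _ N])
    fix e :: real and n assume "e > 0" "n \<ge> N"
    thus "pabs (s n - t n) < e" by (simp add: t_def)
  qed
  moreover have "pcauchy t" using s(1) \<open>pequiv s t\<close> by (rule pcauchy_pequiv)
  ultimately have "t \<in> x" unfolding s(2) qp_class_def by simp
  moreover have "\<forall>n. pabs (t n) \<le> 1" unfolding t_def using N by simp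
  ultimately show "x \<in> Zp p" unfolding Zp_def using x by blast
qed

lemma Zp_subset_Qp: "x \<in> Zp p \<Longrightarrow> x \<in> Qp p"
  unfolding Zp_def by blast

lemma qp_abs_Zp_le_1: "x \<in> Zp p \<Longrightarrow> qp_abs x \<le> 1"
  by (simp add: Zp_iff)

lemma qp_of_rat_in_Zp: "pabs r \<le> 1 \<Longrightarrow> \<iota> r \<in> Zp p"
  by (simp add: Zp_iff)

lemma qp_mult_in_Zp: "x \<in> Zp p \<Longrightarrow> y \<in> Zp p \<Longrightarrow> x \<otimes> y \<in> Zp p"
  by (simp add: Zp_iff qp_abs_mult qp_abs_nonneg mult_le_one)

lemma qp_abs_Zp_mult_le:
  assumes "s \<in> Zp p" "z \<in> Qp p"
  shows "qp_abs (s \<otimes> z) \<le> qp_abs z"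
proof -
  have "qp_abs s \<le> 1" "qp_abs s \<ge> 0" using assms(1) by (simp_all add: Zp_iff qp_abs_nonneg)
  thus ?thesis using assms qp_abs_nonneg[of z]
    by (simp add: Zp_subset_Qp qp_abs_mult mult_left_le_one_le)
qed

lemma qp_mult_eq_0_cancel:
  assumes "c \<in> Qp p" "c \<noteq> \<iota> 0" "t \<in> Qp p" "c \<otimes> t = \<iota> 0"
  shows "t = \<iota> 0"
proof -
  have "qp_abs c * qp_abs t = 0" using assms(4) qp_abs_mult[OF assms(1,3)] by simp
  thus ?thesis using qp_abs_pos[OF assms(1,2)] qp_abs_eq_0_iff[OF assms(3)] by simp
qed

section \<open>Standard lattices\<close>

definition ppow :: "int \<Rightarrow> qp" where
  "ppow i = \<iota> (of_nat p powi i)"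

lemma ppow_closed [simp]: "ppow i \<in> Qp p"
  unfolding ppow_def by simp

lemma ppow_neq_0: "ppow i \<noteq> \<iota> 0"
  unfolding ppow_def using p_gt_1 by simp

lemma qp_abs_ppow: "qp_abs (ppow i) = p powr - real_of_int i"
  unfolding ppow_def by (simp add: pabs_p_powi)

lemma ppow_add_1: "ppow (i + 1) = \<iota> (of_nat p) \<otimes> ppow i"
proof -
  have "(of_nat p :: rat) powi (i + 1) = of_nat p * of_nat p powi i"
    using p_gt_1 by (simp add: power_int_add_1 mult.commute)
  thus ?thesis unfolding ppow_def qp_of_rat_def by simp
qed

lemma p_in_Zp [simp]: "\<iota> (of_nat p) \<in> Zp p"
  using pabs_p_power[of 1] p_gt_1 by (intro qp_of_rat_in_Zp) (simp add: powr_minus_divide)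

definition std_lattice :: "int \<Rightarrow> qp \<Rightarrow> lattice" where
  "std_lattice i x = {(s \<otimes> ppow i \<oplus> t \<otimes> x, t) | s t. s \<in> Zp p \<and> t \<in> Zp p}"

definition std_vertex :: "int \<Rightarrow> qp \<Rightarrow> vertex" where
  "std_vertex i x = homothety_class p (std_lattice i x)"

lemma std_lattice_memI:
  "s \<in> Zp p \<Longrightarrow> t \<in> Zp p \<Longrightarrow> z = (s \<otimes> ppow i \<oplus> t \<otimes> x, t) \<Longrightarrow> z \<in> std_lattice i x"
  unfolding std_lattice_def by blast

lemma std_lattice_memE:
  assumes "z \<in> std_lattice i x"
  obtains s t where "s \<in> Zp p" "t \<in> Zp p" "z = (s \<otimes> ppow i \<oplus> t \<otimes> x, t)"
  using assms unfolding std_lattice_def by blast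

lemma scale_lattice_memI: "(u, v) \<in> L \<Longrightarrow> (c \<otimes> u, c \<otimes> v) \<in> scale_lattice p c L"
  unfolding scale_lattice_def by (rule image_eqI[where x = "(u, v)"]) simp_all

lemma scale_std_lattice_memE:
  assumes "z \<in> scale_lattice p c (std_lattice i x)"
  obtains s t where "s \<in> Zp p" "t \<in> Zp p" "z = (c \<otimes> (s \<otimes> ppow i \<oplus> t \<otimes> x), c \<otimes> t)"
  using assms unfolding scale_lattice_def std_lattice_def by auto

lemma std_lattice_subset_Qp:
  "x \<in> Qp p \<Longrightarrow> z \<in> std_lattice i x \<Longrightarrow> fst z \<in> Qp p \<and> snd z \<in> Qp p"
  unfolding std_lattice_def by (auto simp: Zp_subset_Qp)

lemma std_lattice_is_lattice:
  assumes "x \<in> Qp p"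
  shows "is_lattice p (std_lattice i x)"
proof -
  have "s \<otimes> \<iota> 0 \<oplus> t \<otimes> \<iota> 1 = t" if "s \<in> Zp p" "t \<in> Zp p" for s t
    using that by (simp add: Zp_subset_Qp)
  hence "std_lattice i x = {(s \<otimes> ppow i \<oplus> t \<otimes> x, s \<otimes> \<iota> 0 \<oplus> t \<otimes> \<iota> 1) | s t. s \<in> Zp p \<and> t \<in> Zp p}"
    unfolding std_lattice_def by (intro Collect_cong) (metis (no_types, lifting))
  moreover have "ppow i \<otimes> \<iota> 1 \<oplus> \<iota> (- 1) \<otimes> (\<iota> 0 \<otimes> x) = ppow i"
    using assms by simp
  ultimately show ?thesis
    unfolding is_lattice_def using assms ppow_neq_0
    by (intro exI[of _ "ppow i"] exI[of _ "\<iota> 0"] exI[of _ x] exI[of _ "\<iota> 1"]) simp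
qed

lemma std_lattice_in_std_vertex:
  assumes "x \<in> Qp p"
  shows "std_lattice i x \<in> std_vertex i x"
proof -
  have "(\<lambda>(u, v). (\<iota> 1 \<otimes> u, \<iota> 1 \<otimes> v)) z = z" if "z \<in> std_lattice i x" for z
    using std_lattice_subset_Qp[OF assms that] by (simp add: case_prod_beta)
  hence "scale_lattice p (\<iota> 1) (std_lattice i x) = (\<lambda>z. z) ` std_lattice i x"
    unfolding scale_lattice_def by (rule image_cong[OF refl])
  hence "std_lattice i x = scale_lattice p (\<iota> 1) (std_lattice i x)" by simp
  thus ?thesis unfolding std_vertex_def homothety_class_def
    by (intro CollectI exI[of _ "\<iota> 1"]) simp
qed

lemma std_vertex_in_bt_vertices: "x \<in> Qp p \<Longrightarrow> std_vertex i x \<in> bt_vertices p"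
  unfolding bt_vertices_def std_vertex_def using std_lattice_is_lattice by blast

lemma ppow_in_std_lattice:
  assumes "x \<in> Qp p"
  shows "(ppow i, \<iota> 0) \<in> std_lattice i x"
  by (rule std_lattice_memI[of "\<iota> 1" "\<iota> 0"]) (simp_all add: assms qp_of_rat_in_Zp)

lemma point_in_std_lattice:
  assumes "x \<in> Qp p"
  shows "(x, \<iota> 1) \<in> std_lattice i x"
  by (rule std_lattice_memI[of "\<iota> 0" "\<iota> 1"]) (simp_all add: assms qp_of_rat_in_Zp)

lemma std_lattice_add_1_subset:
  assumes "x \<in> Qp p"
  shows "std_lattice (i + 1) x \<subseteq> std_lattice i x"
proof
  fix z assume "z \<in> std_lattice (i + 1) x"
  then obtain s t where st: "s \<in> Zp p" "t \<in> Zp p" "z = (s \<otimes> ppow (i + 1) \<oplus> t \<otimes> x, t)"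
    by (rule std_lattice_memE)
  have "s \<otimes> ppow (i + 1) = (s \<otimes> \<iota> (of_nat p)) \<otimes> ppow i"
    using st(1) unfolding ppow_add_1 by (simp add: Zp_subset_Qp qp_mult_assoc)
  moreover have "s \<otimes> \<iota> (of_nat p) \<in> Zp p" using st(1) by (simp add: qp_mult_in_Zp)
  ultimately show "z \<in> std_lattice i x" using st by (intro std_lattice_memI) auto
qed

lemma ppow_notin_std_lattice_add_1:
  assumes "x \<in> Qp p"
  shows "(ppow i, \<iota> 0) \<notin> std_lattice (i + 1) x"
proof
  assume "(ppow i, \<iota> 0) \<in> std_lattice (i + 1) x"
  then obtain s where s: "s \<in> Zp p" "ppow i = s \<otimes> ppow (i + 1) \<oplus> \<iota> 0 \<otimes> x"
    by (elim std_lattice_memE) auto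
  hence "ppow i = s \<otimes> ppow (i + 1)" using assms by (simp add: Zp_subset_Qp)
  hence "qp_abs (ppow i) \<le> qp_abs (ppow (i + 1))"
    using qp_abs_Zp_mult_le s(1) by simp
  thus False using p_gt_1 by (simp add: qp_abs_ppow)
qed

lemma scale_p_std_lattice_subset:
  assumes "x \<in> Qp p"
  shows "scale_lattice p (\<iota> (of_nat p)) (std_lattice i x) \<subseteq> std_lattice (i + 1) x"
proof
  fix z assume "z \<in> scale_lattice p (\<iota> (of_nat p)) (std_lattice i x)"
  then obtain s t where st: "s \<in> Zp p" "t \<in> Zp p"
    "z = (\<iota> (of_nat p) \<otimes> (s \<otimes> ppow i \<oplus> t \<otimes> x), \<iota> (of_nat p) \<otimes> t)"
    by (rule scale_std_lattice_memE)
  have "c \<otimes> (s \<otimes> q \<oplus> t \<otimes> x) = s \<otimes> (c \<otimes> q) \<oplus> (c \<otimes> t) \<otimes> x"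
    if "c \<in> Qp p" "s \<in> Qp p" "q \<in> Qp p" "t \<in> Qp p" for c q
    using that assms by (auto elim!: QpE simp: algebra_simps)
  hence "\<iota> (of_nat p) \<otimes> (s \<otimes> ppow i \<oplus> t \<otimes> x) = s \<otimes> ppow (i + 1) \<oplus> (\<iota> (of_nat p) \<otimes> t) \<otimes> x"
    using st(1,2) unfolding ppow_add_1 by (simp add: Zp_subset_Qp)
  moreover have "\<iota> (of_nat p) \<otimes> t \<in> Zp p" using st(2) by (simp add: qp_mult_in_Zp)
  ultimately show "z \<in> std_lattice (i + 1) x" using st by (intro std_lattice_memI) auto
qed

lemma point_notin_scale_p_std_lattice:
  assumes "x \<in> Qp p"
  shows "(x, \<iota> 1) \<notin> scale_lattice p (\<iota> (of_nat p)) (std_lattice i x)"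
proof
  assume "(x, \<iota> 1) \<in> scale_lattice p (\<iota> (of_nat p)) (std_lattice i x)"
  then obtain t where t: "t \<in> Zp p" "\<iota> 1 = \<iota> (of_nat p) \<otimes> t"
    by (elim scale_std_lattice_memE) auto
  have "1 = qp_abs (\<iota> (of_nat p) \<otimes> t)" using t(2) by (metis pabs_one qp_abs_of_rat)
  also have "\<dots> = pabs (of_nat p) * qp_abs t" using t(1) by (simp add: qp_abs_mult Zp_subset_Qp)
  finally have "1 = pabs (of_nat p) * qp_abs t" .
  moreover have "pabs (of_nat p) < 1"
    using pabs_p_power[of 1] p_gt_1 by (simp add: powr_minus_divide)
  ultimately show False
    using mult_left_mono[OF qp_abs_Zp_le_1[OF t(1)] pabs_nonneg[of "of_nat p"]] by linarith
qed

lemma bt_adj_std_vertex: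
  assumes "x \<in> Qp p"
  shows "bt_adj p (std_vertex i x) (std_vertex (i + 1) x)"
  unfolding bt_adj_def
proof (intro conjI std_vertex_in_bt_vertices assms bexI)
  show "std_lattice (i + 1) x \<subset> std_lattice i x"
    using std_lattice_add_1_subset ppow_in_std_lattice ppow_notin_std_lattice_add_1 assms
    by blast
  show "scale_lattice p (\<iota> (of_nat p)) (std_lattice i x) \<subset> std_lattice (i + 1) x"
    using scale_p_std_lattice_subset point_in_std_lattice point_notin_scale_p_std_lattice assms
    by blast
qed (use std_lattice_in_std_vertex assms in auto)

lemma std_lattice_homothety_abs_eq_1:
  assumes "x \<in> Qp p" "y \<in> Qp p" "c \<in> Qp p"
    and eq: "std_lattice i x = scale_lattice p c (std_lattice j y)"
  shows "qp_abs c = 1"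
proof -
  have "(x, \<iota> 1) \<in> scale_lattice p c (std_lattice j y)"
    using point_in_std_lattice[of x i] assms(1) eq by simp
  then obtain t where t: "t \<in> Zp p" "\<iota> 1 = c \<otimes> t"
    by (elim scale_std_lattice_memE) auto
  have "1 = qp_abs (c \<otimes> t)" using t(2) by (metis pabs_one qp_abs_of_rat)
  also have "\<dots> \<le> qp_abs c"
    using t(1) assms(3) qp_abs_Zp_le_1[OF t(1)] qp_abs_nonneg[of c]
      qp_abs_nonneg[OF Zp_subset_Qp[OF t(1)]]
    by (simp add: qp_abs_mult Zp_subset_Qp mult_right_le_one_le)
  finally have "1 \<le> qp_abs c" .
  moreover have "(c \<otimes> y, c \<otimes> \<iota> 1) \<in> std_lattice i x"
    using scale_lattice_memI[OF point_in_std_lattice[OF assms(2)]] eq by simp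
  hence "c \<in> Zp p" using assms(3) by (auto elim: std_lattice_memE)
  ultimately show ?thesis using qp_abs_Zp_le_1 by fastforce
qed

lemma std_lattice_homothety_index_eq:
  assumes "x \<in> Qp p" "y \<in> Qp p" "c \<in> Qp p" "qp_abs c = 1"
    and eq: "std_lattice i x = scale_lattice p c (std_lattice j y)"
  shows "i = j"
proof -
  have c: "c \<noteq> \<iota> 0" using assms(4) by auto
  have "(ppow i, \<iota> 0) \<in> scale_lattice p c (std_lattice j y)"
    using ppow_in_std_lattice[of x i] assms(1) eq by simp
  then obtain s t where st: "s \<in> Zp p" "t \<in> Zp p"
    "ppow i = c \<otimes> (s \<otimes> ppow j \<oplus> t \<otimes> y)" "\<iota> 0 = c \<otimes> t"
    by (elim scale_std_lattice_memE) auto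
  have "t = \<iota> 0" using qp_mult_eq_0_cancel[OF assms(3) c] st(2,4) by (simp add: Zp_subset_Qp)
  hence "qp_abs (ppow i) = qp_abs (s \<otimes> ppow j)"
    using st(1,3) assms by (simp add: qp_abs_mult Zp_subset_Qp)
  hence "p powr - real_of_int i \<le> p powr - real_of_int j"
    using qp_abs_Zp_mult_le[OF st(1) ppow_closed] by (simp add: qp_abs_ppow)
  moreover
  have "(c \<otimes> ppow j, c \<otimes> \<iota> 0) \<in> std_lattice i x"
    using scale_lattice_memI[OF ppow_in_std_lattice[OF assms(2)]] eq by simp
  then obtain s' where s': "s' \<in> Zp p" "c \<otimes> ppow j = s' \<otimes> ppow i"
    using assms(1,3) by (elim std_lattice_memE) (simp add: Zp_subset_Qp)
  have "qp_abs (ppow j) = qp_abs (c \<otimes> ppow j)" using assms(3,4) by (simp add: qp_abs_mult)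
  hence "qp_abs (ppow j) = qp_abs (s' \<otimes> ppow i)" using s'(2) by simp
  hence "p powr - real_of_int j \<le> p powr - real_of_int i"
    using qp_abs_Zp_mult_le[OF s'(1) ppow_closed] by (simp add: qp_abs_ppow)
  ultimately show "i = j" using p_gt_1 by simp
qed

lemma std_vertex_eqD:
  assumes "x \<in> Qp p" "y \<in> Qp p" "std_vertex i x = std_vertex j y"
  shows "i = j" "qp_abs (x \<ominus> y) \<le> qp_abs (ppow i)"
proof -
  obtain c where c: "c \<in> Qp p" "std_lattice i x = scale_lattice p c (std_lattice j y)"
    using std_lattice_in_std_vertex[OF assms(1)] assms(3)
    unfolding std_vertex_def homothety_class_def by blast
  have abs_c: "qp_abs c = 1" using std_lattice_homothety_abs_eq_1 assms(1,2) c by blast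
  thus "i = j" using std_lattice_homothety_index_eq assms(1,2) c by blast
  have "(x, \<iota> 1) \<in> scale_lattice p c (std_lattice j y)"
    using point_in_std_lattice[of x i] assms(1) c(2) by simp
  then obtain s t where st: "s \<in> Zp p" "t \<in> Zp p"
    "x = c \<otimes> (s \<otimes> ppow j \<oplus> t \<otimes> y)" "\<iota> 1 = c \<otimes> t"
    by (elim scale_std_lattice_memE) auto
  have "c \<otimes> (s \<otimes> q \<oplus> t \<otimes> y) \<ominus> y = (c \<otimes> s) \<otimes> q \<oplus> (c \<otimes> t \<ominus> \<iota> 1) \<otimes> y"
    if "s \<in> Qp p" "q \<in> Qp p" "t \<in> Qp p" for s q t
    using that assms(2) c(1) by (auto elim!: QpE simp: qp_of_rat_def algebra_simps)
  hence "x \<ominus> y = (c \<otimes> s) \<otimes> ppow j"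
    using st(1-3) st(4)[symmetric] assms(2) c(1) by (simp add: Zp_subset_Qp)
  hence "qp_abs (x \<ominus> y) = qp_abs s * p powr - real_of_int j"
    using st(1) c(1) abs_c by (simp add: qp_abs_mult qp_abs_ppow Zp_subset_Qp)
  also have "\<dots> \<le> p powr - real_of_int j"
    using qp_abs_Zp_le_1[OF st(1)] qp_abs_nonneg[of s] st(1)
    by (simp add: mult_left_le_one_le Zp_subset_Qp)
  finally show "qp_abs (x \<ominus> y) \<le> qp_abs (ppow i)" using \<open>i = j\<close> by (simp add: qp_abs_ppow)
qed

section \<open>Uncountably many apartments\<close>

lemma qp_diff_eq_0_imp_eq:
  assumes "x \<in> Qp p" "y \<in> Qp p" "x \<ominus> y = \<iota> 0"
  shows "x = y"
proof -
  have "x = (x \<ominus> y) \<oplus> y" using assms(1,2) by (auto elim!: QpE simp: qp_of_rat_def)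
  thus ?thesis using assms by simp
qed

lemma exists_p_powr_less: "e > 0 \<Longrightarrow> \<exists>N::nat. p powr - real N < e"
  using real_arch_pow_inv[of e "1 / p"] p_gt_1
  by (simp add: powr_minus_divide powr_realpow power_one_over)

definition bt_line :: "(int \<Rightarrow> vertex) \<Rightarrow> bool" where
  "bt_line f \<longleftrightarrow> inj f \<and> (\<forall>i. bt_adj p (f i) (f (i + 1)))"

definition line_edge :: "(int \<Rightarrow> vertex) \<Rightarrow> int \<Rightarrow> edge" where
  "line_edge f i = {f i, f (i + 1)}"

lemma bt_apartmentsE:
  assumes "S \<in> bt_apartments p"
  obtains f where "bt_line f" "S = range (line_edge f)"
  using assms unfolding bt_apartments_def bt_line_def line_edge_def by blast

lemma bt_apartmentsI: "bt_line f \<Longrightarrow> range (line_edge f) \<in> bt_apartments p"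
  unfolding bt_apartments_def bt_line_def line_edge_def by blast

definition std_apartment :: "qp \<Rightarrow> apartment" where
  "std_apartment x = range (line_edge (\<lambda>i. std_vertex i x))"

lemma std_apartment_in_bt_apartments:
  assumes "x \<in> Qp p"
  shows "std_apartment x \<in> bt_apartments p"
proof -
  have "inj (\<lambda>i. std_vertex i x)"
    using std_vertex_eqD(1)[OF assms assms] by (rule injI)
  thus ?thesis unfolding std_apartment_def
    using bt_adj_std_vertex[OF assms] by (intro bt_apartmentsI) (simp add: bt_line_def)
qed

lemma std_apartment_inject:
  assumes "x \<in> Qp p" "y \<in> Qp p" "std_apartment x = std_apartment y"
  shows "x = y"
proof -
  have close: "qp_abs (x \<ominus> y) \<le> p powr - real_of_int i" for i :: int
  proof -
    have "{std_vertex i x, std_vertex (i + 1) x} \<in> std_apartment x"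
      unfolding std_apartment_def line_edge_def by (rule rangeI)
    hence "{std_vertex i x, std_vertex (i + 1) x} \<in> std_apartment y"
      by (simp only: assms(3))
    then obtain k where "{std_vertex i x, std_vertex (i + 1) x} = {std_vertex k y, std_vertex (k + 1) y}"
      unfolding std_apartment_def line_edge_def by (rule rangeE)
    hence "std_vertex i x = std_vertex k y \<or> std_vertex i x = std_vertex (k + 1) y"
      unfolding doubleton_eq_iff by (elim disjE conjE) simp_all
    then obtain k' where "std_vertex i x = std_vertex k' y" by blast
    from std_vertex_eqD(2)[OF assms(1,2) this] show ?thesis by (simp add: qp_abs_ppow)
  qed
  have "qp_abs (x \<ominus> y) = 0"
  proof (rule ccontr)
    assume "qp_abs (x \<ominus> y) \<noteq> 0"
    hence "qp_abs (x \<ominus> y) > 0" using qp_abs_nonneg[of "x \<ominus> y"] assms by simp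
    then obtain N :: nat where "p powr - real N < qp_abs (x \<ominus> y)" using exists_p_powr_less by blast
    thus False using close[of "int N"] by simp
  qed
  thus ?thesis using qp_diff_eq_0_imp_eq assms by (simp add: qp_abs_eq_0_iff)
qed

definition digit :: "nat set \<Rightarrow> nat \<Rightarrow> rat" where
  "digit S j = (if j \<in> S then of_nat p ^ j else 0)"

definition digit_sum :: "nat set \<Rightarrow> nat \<Rightarrow> rat" where
  "digit_sum S n = (\<Sum>j<n. digit S j)"

lemma pabs_digit_le: "pabs (digit S j) \<le> p powr - real j"
  by (simp add: digit_def pabs_p_power)

lemma pabs_digit_sum_diff_le:
  assumes "n \<le> m"
  shows "pabs (digit_sum S m - digit_sum S n) \<le> p powr - real n"
proof -
  have "digit_sum S m - digit_sum S n = (\<Sum>j\<in>{n..<m}. digit S j)"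
    unfolding digit_sum_def using assms by (simp add: sum_diff_nat_ivl lessThan_atLeast0)
  also have "pabs \<dots> \<le> p powr - real n"
  proof (rule pabs_sum_le)
    fix j assume "j \<in> {n..<m}"
    hence "p powr - real j \<le> p powr - real n" using p_gt_1 by simp
    thus "pabs (digit S j) \<le> p powr - real n" using pabs_digit_le[of S j] by linarith
  qed simp
  finally show ?thesis .
qed

lemma pcauchy_digit_sum: "pcauchy (digit_sum S)"
  unfolding p_cauchy_def
proof (intro allI impI)
  fix e :: real assume "e > 0"
  then obtain N :: nat where N: "p powr - real N < e" using exists_p_powr_less by blast
  have "pabs (digit_sum S m - digit_sum S n) < e" if "m \<ge> N" "n \<ge> N" for m n
  proof -
    have "pabs (digit_sum S m - digit_sum S n) \<le> p powr - real (min m n)"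
      using pabs_digit_sum_diff_le[of "min m n" "max m n" S] pabs_minus_commute
      by (cases "n \<le> m") (auto simp: min_def max_def)
    also have "\<dots> \<le> p powr - real N" using that p_gt_1 by simp
    finally show ?thesis using N by linarith
  qed
  thus "\<exists>N. \<forall>m\<ge>N. \<forall>n\<ge>N. pabs (digit_sum S m - digit_sum S n) < e" by blast
qed

definition qp_of_digits :: "nat set \<Rightarrow> qp" where
  "qp_of_digits S = pclass (digit_sum S)"

lemma qp_of_digits_closed: "qp_of_digits S \<in> Qp p"
  unfolding qp_of_digits_def using pcauchy_digit_sum by simp

lemma pabs_digit_sum_diff_eq:
  assumes before: "\<And>j. j < k \<Longrightarrow> digit S j = digit T j"
    and at: "digit S k \<noteq> digit T k" and "k < n"
  shows "pabs (digit_sum S n - digit_sum T n) = p powr - real k"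
proof -
  define g where "g j = digit S j - digit T j" for j
  have "pabs (g k) = p powr - real k"
    using at unfolding g_def digit_def by (auto simp: pabs_p_power split: if_splits)
  have "pabs (g j) \<le> p powr - real (Suc k)" if "j \<ge> Suc k" for j
  proof -
    have "pabs (digit S j + - digit T j) \<le> p powr - real j"
      using pabs_digit_le[of T j] by (intro pabs_add_le pabs_digit_le) simp
    also have "\<dots> \<le> p powr - real (Suc k)" using that p_gt_1 by simp
    finally show ?thesis unfolding g_def by simp
  qed
  hence "pabs (\<Sum>j\<in>{Suc k..<n}. g j) \<le> p powr - real (Suc k)" by (intro pabs_sum_le) auto
  also have "\<dots> < p powr - real k" using p_gt_1 by simp
  finally have tail: "pabs (\<Sum>j\<in>{Suc k..<n}. g j) < pabs (g k)"
    using \<open>pabs (g k) = p powr - real k\<close> by simp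
  have "digit_sum S n - digit_sum T n = (\<Sum>j<Suc k. g j) + (\<Sum>j\<in>{Suc k..<n}. g j)"
    unfolding digit_sum_def g_def sum_subtractf[symmetric] lessThan_atLeast0
    by (rule sym, rule sum.atLeastLessThan_concat) (use \<open>k < n\<close> in auto)
  also have "(\<Sum>j<Suc k. g j) = g k" using before by (simp add: g_def)
  finally show ?thesis
    using pabs_add_eq_left[OF tail] \<open>pabs (g k) = p powr - real k\<close> by simp
qed

lemma qp_of_digits_inj: "inj qp_of_digits"
proof (rule injI, rule ccontr)
  fix S T assume eq: "qp_of_digits S = qp_of_digits T" and "S \<noteq> T"
  define k where "k = (LEAST j. digit S j \<noteq> digit T j)"
  have "\<exists>j. digit S j \<noteq> digit T j"
    using \<open>S \<noteq> T\<close> p_gt_1 by (auto simp: digit_def set_eq_iff split: if_splits)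
  hence k: "digit S k \<noteq> digit T k" unfolding k_def by (rule LeastI_ex)
  have before: "digit S j = digit T j" if "j < k" for j
    using not_less_Least[of j] that unfolding k_def by blast
  have "pequiv (digit_sum S) (digit_sum T)"
    using eq pcauchy_digit_sum unfolding qp_of_digits_def by (simp add: pclass_eq_iff)
  moreover have "p powr - real k > 0" using p_gt_1 by simp
  ultimately obtain N where "\<forall>n\<ge>N. pabs (digit_sum S n - digit_sum T n) < p powr - real k"
    unfolding p_equiv_def by blast
  hence "pabs (digit_sum S (max N (Suc k)) - digit_sum T (max N (Suc k))) < p powr - real k"
    by simp
  thus False using pabs_digit_sum_diff_eq[OF before k, of "max N (Suc k)"] by simp
qed

lemma uncountable_bt_apartments: "uncountable (bt_apartments p)"
proof -
  have "inj (\<lambda>S. std_apartment (qp_of_digits S))"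
  proof (rule injI)
    fix S T assume "std_apartment (qp_of_digits S) = std_apartment (qp_of_digits T)"
    hence "qp_of_digits S = qp_of_digits T"
      using std_apartment_inject qp_of_digits_closed by blast
    thus "S = T" using qp_of_digits_inj by (simp add: inj_eq)
  qed
  moreover have "range (\<lambda>S. std_apartment (qp_of_digits S)) \<subseteq> bt_apartments p"
    using std_apartment_in_bt_apartments qp_of_digits_closed by blast
  ultimately show ?thesis
    using uncountable_nat_set_set by (metis countable_image_inj_on countable_subset)
qed

lemma act_vec_mult:
  assumes "u \<in> Qp p" "v \<in> Qp p"
  shows "act_vec p g (act_vec p h (u, v)) = act_vec p (g ** h) (u, v)"
proof -
  have "\<iota> a \<otimes> (\<iota> b \<otimes> u \<oplus> \<iota> c \<otimes> v) \<oplus> \<iota> d \<otimes> (\<iota> e \<otimes> u \<oplus> \<iota> f \<otimes> v) =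
      \<iota> (a * b + d * e) \<otimes> u \<oplus> \<iota> (a * c + d * f) \<otimes> v" for a b c d e f
    using assms by (auto elim!: QpE simp: qp_of_rat_def algebra_simps)
  thus ?thesis unfolding act_vec_def by (simp add: matrix_mult_2_entries)
qed

lemma act_vec_one: "u \<in> Qp p \<Longrightarrow> v \<in> Qp p \<Longrightarrow> act_vec p (mat 1) (u, v) = (u, v)"
  unfolding act_vec_def by (simp add: mat_def)

lemma bt_vertex_points_in_Qp:
  assumes "x \<in> bt_vertices p" "L \<in> x" "z \<in> L"
  shows "fst z \<in> Qp p \<and> snd z \<in> Qp p"
proof -
  obtain L0 where L0: "is_lattice p L0" "x = homothety_class p L0"
    using assms(1) unfolding bt_vertices_def by blast
  then obtain a b c d where abcd: "a \<in> Qp p" "b \<in> Qp p" "c \<in> Qp p" "d \<in> Qp p"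
    "L0 = {(s \<otimes> a \<oplus> t \<otimes> c, s \<otimes> b \<oplus> t \<otimes> d) | s t. s \<in> Zp p \<and> t \<in> Zp p}"
    unfolding is_lattice_def by blast
  obtain e where e: "e \<in> Qp p" "L = scale_lattice p e L0"
    using assms(2) L0(2) unfolding homothety_class_def by blast
  show ?thesis using assms(3) abcd e unfolding scale_lattice_def by (auto simp: Zp_subset_Qp)
qed

lemma act_vertex_mult:
  assumes "x \<in> bt_vertices p"
  shows "act_vertex p g (act_vertex p h x) = act_vertex p (g ** h) x"
proof -
  have "act_vec p g (act_vec p h z) = act_vec p (g ** h) z" if "L \<in> x" "z \<in> L" for L z
    using bt_vertex_points_in_Qp[OF assms that] act_vec_mult by (cases z) simp
  thus ?thesis unfolding act_vertex_def image_image by (intro image_cong refl) auto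
qed

lemma act_vertex_one:
  assumes "x \<in> bt_vertices p"
  shows "act_vertex p (mat 1) x = x"
proof -
  have "act_vec p (mat 1) ` L = L" if "L \<in> x" for L
    using bt_vertex_points_in_Qp[OF assms that] act_vec_one
    by (intro image_cong[where g = id, simplified]) (auto simp: case_prod_beta)
  thus ?thesis unfolding act_vertex_def by simp
qed

lemma act_vertex_inj:
  assumes "g \<in> SL2Q" "x \<in> bt_vertices p" "y \<in> bt_vertices p"
    and "act_vertex p g x = act_vertex p g y"
  shows "x = y"
proof -
  obtain h where h: "h ** g = mat 1" using SL2Q_left_inverse[OF assms(1)] .
  have "x = act_vertex p h (act_vertex p g x)"
    using act_vertex_mult[OF assms(2)] act_vertex_one[OF assms(2)] h by simp
  also have "\<dots> = y"
    using assms(4) act_vertex_mult[OF assms(3)] act_vertex_one[OF assms(3)] h by simp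
  finally show ?thesis .
qed

lemma bt_line_vertex: "bt_line f \<Longrightarrow> f i \<in> bt_vertices p"
  unfolding bt_line_def bt_adj_def by blast

section \<open>Apartments with a strongly transitive orbit\<close>

lemma act_edge_pair [simp]: "act_edge p g {a, b} = {act_vertex p g a, act_vertex p g b}"
  unfolding act_edge_def by simp

lemma apartment_in_own_orbit:
  assumes "bt_line f"
  shows "range (line_edge f) \<in> orbit_apartment p (range (line_edge f))"
proof -
  have "act_apartment p (mat 1) (range (line_edge f)) = range (line_edge f)"
    unfolding act_apartment_def line_edge_def
    using act_vertex_one[OF bt_line_vertex[OF assms]] by (simp add: image_image)
  thus ?thesis unfolding orbit_apartment_def using SL2Q_one by (metis imageI)
qed

lemma strongly_transitiveD:
  assumes "strongly_transitive_wrt p A" "S \<in> A" "C \<in> S" "S' \<in> A" "C' \<in> S'"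
  shows "\<exists>g\<in>SL2Q. act_apartment p g S = S' \<and> act_edge p g C = C'"
  using assms unfolding strongly_transitive_wrt_def by blast

lemma line_stabiliser_walk:
  assumes line: "bt_line f" and g: "g \<in> SL2Q"
    and stab: "act_apartment p g (range (line_edge f)) = range (line_edge f)"
  obtains \<tau> where "\<And>i. act_vertex p g (f i) = f (\<tau> i)"
    "(\<forall>i. \<tau> i = \<tau> 0 + i) \<or> (\<forall>i. \<tau> i = \<tau> 0 - i)"
proof -
  have f_eq: "f a = f b \<longleftrightarrow> a = b" for a b
    using line unfolding bt_line_def by (auto dest: injD)
  have edge: "\<exists>j. {act_vertex p g (f i), act_vertex p g (f (i + 1))} = {f j, f (j + 1)}" for i
  proof -
    have "act_edge p g (line_edge f i) \<in> range (line_edge f)"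
      using stab unfolding act_apartment_def by blast
    thus ?thesis unfolding line_edge_def by auto
  qed
  have "\<exists>k. act_vertex p g (f i) = f k" for i
    using edge[of i] by (auto simp: doubleton_eq_iff)
  then obtain \<tau> where \<tau>: "\<And>i. act_vertex p g (f i) = f (\<tau> i)" by metis
  have g_eq: "act_vertex p g (f a) = act_vertex p g (f b) \<longleftrightarrow> a = b" for a b
    using act_vertex_inj[OF g bt_line_vertex[OF line] bt_line_vertex[OF line]] f_eq by blast
  have "\<tau> (i + 1) = \<tau> i + 1 \<or> \<tau> (i + 1) = \<tau> i - 1" for i
  proof -
    obtain j where "{f (\<tau> i), f (\<tau> (i + 1))} = {f j, f (j + 1)}"
      using edge[of i] unfolding \<tau> by blast
    moreover have "\<tau> i \<noteq> \<tau> (i + 1)" using g_eq[of i "i + 1"] \<tau> f_eq by simp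
    ultimately show ?thesis by (auto simp: doubleton_eq_iff f_eq)
  qed
  moreover have "\<tau> (i + 2) \<noteq> \<tau> i" for i using g_eq[of "i + 2" i] \<tau> f_eq by simp
  ultimately have "(\<forall>i. \<tau> i = \<tau> 0 + i) \<or> (\<forall>i. \<tau> i = \<tau> 0 - i)"
    by (rule unit_walk_without_return)
  thus ?thesis using that \<tau> by blast
qed

lemma line_stabiliser_cases:
  assumes line: "bt_line f" and g: "g \<in> SL2Q"
    and stab: "act_apartment p g (range (line_edge f)) = range (line_edge f)"
    and edge: "act_edge p g (line_edge f 0) = line_edge f j"
  shows "(\<forall>i. act_vertex p g (f i) = f (j + i)) \<or> (\<forall>i. act_vertex p g (f i) = f (j + 1 - i))"
proof -
  have f_eq: "f a = f b \<longleftrightarrow> a = b" for a b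
    using line unfolding bt_line_def by (auto dest: injD)
  obtain \<tau> where \<tau>: "\<And>i. act_vertex p g (f i) = f (\<tau> i)"
    and walk: "(\<forall>i. \<tau> i = \<tau> 0 + i) \<or> (\<forall>i. \<tau> i = \<tau> 0 - i)"
    using line_stabiliser_walk[OF line g stab] by blast
  have ends: "(\<tau> 0 = j \<and> \<tau> 1 = j + 1) \<or> (\<tau> 0 = j + 1 \<and> \<tau> 1 = j)"
    using edge \<tau> unfolding line_edge_def by (simp add: doubleton_eq_iff f_eq)
  from walk show ?thesis
  proof
    assume h: "\<forall>i. \<tau> i = \<tau> 0 + i"
    have "\<tau> 0 = j" using ends h[rule_format, of 1] by auto
    hence "act_vertex p g (f i) = f (j + i)" for i using h[rule_format, of i] \<tau> by simp
    thus ?thesis by blast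
  next
    assume h: "\<forall>i. \<tau> i = \<tau> 0 - i"
    have "\<tau> 0 = j + 1" using ends h[rule_format, of 1] by auto
    hence "act_vertex p g (f i) = f (j + 1 - i)" for i using h[rule_format, of i] \<tau> by simp
    thus ?thesis by blast
  qed
qed

text \<open>Strong transitivity provides elements of the stabiliser moving the edge
  \<open>{f 0, f 1}\<close> to \<open>{f 1, f 2}\<close> and to \<open>{f 2, f 3}\<close>; if both act as reflections,
  their product is a translation by one step.\<close>
lemma strongly_transitive_translation:
  assumes line: "bt_line f"
    and st: "strongly_transitive_wrt p (orbit_apartment p (range (line_edge f)))"
  obtains h k where "h \<in> SL2Q" "k \<in> {1, 2}" "\<And>i. act_vertex p h (f i) = f (i + k)"
proof -
  let ?S = "range (line_edge f)"
  have move: "\<exists>g\<in>SL2Q. act_apartment p g ?S = ?S \<and> act_edge p g (line_edge f 0) = line_edge f j"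
    for j using strongly_transitiveD[OF st apartment_in_own_orbit[OF line] rangeI
        apartment_in_own_orbit[OF line] rangeI] .
  obtain g1 where g1: "g1 \<in> SL2Q" "act_apartment p g1 ?S = ?S"
    "act_edge p g1 (line_edge f 0) = line_edge f 1"
    using move[of 1] by blast
  obtain g2 where g2: "g2 \<in> SL2Q" "act_apartment p g2 ?S = ?S"
    "act_edge p g2 (line_edge f 0) = line_edge f 2"
    using move[of 2] by blast
  consider "\<forall>i. act_vertex p g1 (f i) = f (1 + i)"
    | "\<forall>i. act_vertex p g2 (f i) = f (2 + i)"
    | "\<forall>i. act_vertex p g1 (f i) = f (1 + 1 - i)" "\<forall>i. act_vertex p g2 (f i) = f (2 + 1 - i)"
    using line_stabiliser_cases[OF line g1] line_stabiliser_cases[OF line g2] by blast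
  thus ?thesis
  proof cases
    case 1 thus ?thesis using that[of g1 1] g1(1) by (simp add: add.commute)
  next
    case 2 thus ?thesis using that[of g2 2] g2(1) by (simp add: add.commute)
  next
    case 3
    have "act_vertex p (g2 ** g1) (f i) = f (i + 1)" for i
    proof -
      have "act_vertex p (g2 ** g1) (f i) = act_vertex p g2 (act_vertex p g1 (f i))"
        using act_vertex_mult[OF bt_line_vertex[OF line]] by simp
      also have "\<dots> = f (1 + i)" using 3 by simp
      finally show ?thesis by (simp add: add.commute)
    qed
    thus ?thesis using that[of "g2 ** g1" 1] SL2Q_mult[OF g2(1) g1(1)] by simp
  qed
qed

definition base_edge :: edge where
  "base_edge = {std_vertex 0 (\<iota> 0), std_vertex 1 (\<iota> 0)}"

definition base_orbit :: "vertex set" where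
  "base_orbit = {act_vertex p g v | g v. g \<in> SL2Q \<and> v \<in> base_edge}"

lemma base_edge_in_bt_edges: "base_edge \<in> bt_edges p"
  using bt_adj_std_vertex[of "\<iota> 0" 0] unfolding bt_edges_def base_edge_def by auto

lemma countable_base_orbit: "countable base_orbit"
proof -
  have "base_orbit = (\<lambda>(g, v). act_vertex p g v) ` (SL2Q \<times> base_edge)"
    unfolding base_orbit_def by auto
  thus ?thesis using countable_SL2Q by (simp add: base_edge_def)
qed

text \<open>Any edge lies in a common apartment of the orbit with \<open>base_edge\<close>, so strong
  transitivity moves \<open>base_edge\<close> onto it.\<close>
lemma strongly_transitive_vertex_in_base_orbit:
  assumes line: "bt_line f"
    and st: "strongly_transitive_wrt p (orbit_apartment p (range (line_edge f)))"
  shows "f i \<in> base_orbit"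
proof -
  let ?A = "orbit_apartment p (range (line_edge f))"
  have "line_edge f i \<in> bt_edges p"
    using line unfolding bt_line_def bt_edges_def line_edge_def by blast
  then obtain S where S: "S \<in> ?A" "base_edge \<in> S" "line_edge f i \<in> S"
    using st base_edge_in_bt_edges
    unfolding strongly_transitive_wrt_def apartment_system_def by blast
  obtain g where g: "g \<in> SL2Q" "act_edge p g base_edge = line_edge f i"
    using strongly_transitiveD[OF st S(1,2) apartment_in_own_orbit[OF line] rangeI] by blast
  hence "f i \<in> act_vertex p g ` base_edge"
    unfolding act_edge_def line_edge_def by (metis insertI1)
  thus ?thesis unfolding base_orbit_def using g(1) by blast
qed

lemma lines_eq_if_same_translation:
  assumes "bt_line f" "bt_line f'" "h \<in> SL2Q" "k \<in> {1, 2}"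
    and "\<And>i. act_vertex p h (f i) = f (i + k)" "\<And>i. act_vertex p h (f' i) = f' (i + k)"
    and "f 0 = f' 0" "f 1 = f' 1"
  shows "f = f'"
proof
  fix i
  have "f (j + k) = f' (j + k) \<longleftrightarrow> f j = f' j" for j
    using act_vertex_inj[OF assms(3) bt_line_vertex[OF assms(1)] bt_line_vertex[OF assms(2)]]
      assms(5,6) by metis
  hence "f i = f' i \<longleftrightarrow> f (i mod k) = f' (i mod k)"
    by (rule shift_invariant_int_pred)
  moreover have "i mod k \<in> {0, 1}" using assms(4) by auto
  ultimately show "f i = f' i" using assms(7,8) by auto
qed

definition translation_datum :: "apartment \<Rightarrow> (rat^2^2) \<times> int \<times> vertex \<times> vertex \<Rightarrow> bool" where
  "translation_datum S = (\<lambda>(h, k, u, w). \<exists>f. bt_line f \<and> S = range (line_edge f) \<and>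
     (\<forall>i. act_vertex p h (f i) = f (i + k)) \<and> f 0 = u \<and> f 1 = w)"

lemma translation_datum_exists:
  assumes "S \<in> bt_apartments p" "strongly_transitive_wrt p (orbit_apartment p S)"
  shows "\<exists>d \<in> SL2Q \<times> {1, 2} \<times> base_orbit \<times> base_orbit. translation_datum S d"
proof -
  obtain f where line: "bt_line f" and S: "S = range (line_edge f)"
    using assms(1) by (rule bt_apartmentsE)
  note st = assms(2)[unfolded S]
  obtain h k where "h \<in> SL2Q" "k \<in> {1, 2}" "\<And>i. act_vertex p h (f i) = f (i + k)"
    using strongly_transitive_translation[OF line st] by blast
  moreover have "f 0 \<in> base_orbit" "f 1 \<in> base_orbit"
    using strongly_transitive_vertex_in_base_orbit[OF line st] by auto
  ultimately show ?thesis
    unfolding translation_datum_def using line S by (intro bexI[of _ "(h, k, f 0, f 1)"]) auto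
qed

lemma translation_datum_unique:
  assumes "h \<in> SL2Q" "k \<in> {1, 2}"
    and "translation_datum S (h, k, u, w)" "translation_datum S' (h, k, u, w)"
  shows "S = S'"
proof -
  obtain f where f: "bt_line f" "S = range (line_edge f)"
    "\<And>i. act_vertex p h (f i) = f (i + k)" "f 0 = u" "f 1 = w"
    using assms(3) unfolding translation_datum_def by auto
  obtain f' where f': "bt_line f'" "S' = range (line_edge f')"
    "\<And>i. act_vertex p h (f' i) = f' (i + k)" "f' 0 = u" "f' 1 = w"
    using assms(4) unfolding translation_datum_def by auto
  have "f = f'"
    using lines_eq_if_same_translation[OF f(1) f'(1) assms(1,2) f(3) f'(3)] f(4,5) f'(4,5)
    by simp
  thus ?thesis using f(2) f'(2) by simp
qed

lemma countable_strongly_transitive_apartments: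
  "countable {S \<in> bt_apartments p. strongly_transitive_wrt p (orbit_apartment p S)}"
  (is "countable ?T")
proof -
  let ?D = "SL2Q \<times> {1, 2} \<times> base_orbit \<times> base_orbit"
  have "?T \<subseteq> (\<lambda>d. THE S. translation_datum S d) ` ?D"
  proof
    fix S assume "S \<in> ?T"
    then obtain d where d: "d \<in> ?D" "translation_datum S d"
      using translation_datum_exists by blast
    obtain h k u w where hkuw: "d = (h, k, u, w)" by (cases d) blast
    have "(THE S. translation_datum S d) = S"
    proof (rule the_equality)
      fix S' assume "translation_datum S' d"
      thus "S' = S"
        using d unfolding hkuw by (intro translation_datum_unique[of h k S' u w S]) auto
    qed (rule d(2))
    thus "S \<in> (\<lambda>d. THE S. translation_datum S d) ` ?D" using d(1) by (rule image_eqI[OF sym])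
  qed
  moreover have "countable ?D"
    by (intro countable_SIGMA countable_SL2Q countable_base_orbit) simp_all
  ultimately show ?thesis by (rule countable_subset[OF _ countable_image])
qed

end

theorem mainTheorem16:
  fixes p :: nat
  assumes "prime p"
  shows "countable {S \<in> bt_apartments p. strongly_transitive_wrt p (orbit_apartment p S)}
         \<and> \<not> countable (bt_apartments p)"
proof -
  interpret padic p using assms by unfold_locales
  show ?thesis
    using countable_strongly_transitive_apartments uncountable_bt_apartments by blast
qed

end
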